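(* Let $\mathcal X$ and $\mathcal U$ be finite nonempty sets, $f:\mathcal X\times\mathcal U\to\mathcal X$, and $\ell,g:\mathcal X\to\mathbb R$. Define, for $x\in\mathcal X$, $$V_{\mathrm A}^*(x)=\max_{\pi\in\Pi}\min_{\tau\in\mathbb N} g(\xi_x^\pi(\tau)),\qquad \tilde\ell(x)=\min\{\ell(x),V_{\mathrm A}^*(x)\},$$ $$\tilde V_{\mathrm{RA}}^*(x)=\max_{\pi\in\Pi}\max_{\tau\in\mathbb N}\min\Big\{\tilde\ell(\xi_x^\pi(\tau)),\ \min_{\kappa\le\tau} g(\xi_x^\pi(\kappa))\Big\}.$$ Then for every $x\in\mathcal X$, $$\max_{\bar\pi\in\overline\Pi}\min\Big\{\max_{\tau\in\mathbb N}\ell(\bar\xi_x^{\bar\pi}(\tau)),\ \min_{\tau\in\mathbb N} g(\bar\xi_x^{\bar\pi}(\tau))\Big\}=\max_{\mathbf u\in\mathbb U}\min\Big\{\max_{\tau\in\mathbb N}\ell(\xi_x^{\mathbf u}(\tau)),\ \min_{\kappa\in\mathbb N} g(\xi_x^{\mathbf u}(\kappa))\Big\}=\tilde V_{\mathrm{RA}}^*(x).$$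
   Context: $\mathbb N=\{0,1,2,\dots\}$. $\Pi$ is the set of maps $\pi:\mathcal X\to\mathcal U$ and $\mathbb U$ the set of action sequences $\mathbf u:\mathbb N\to\mathcal U$. For $x\in\mathcal X$ and $\pi\in\Pi$, $\xi_x^\pi:\mathbb N\to\mathcal X$ is given by $\xi_x^\pi(0)=x$, $\xi_x^\pi(t+1)=f(\xi_x^\pi(t),\pi(\xi_x^\pi(t)))$; for $\mathbf u\in\mathbb U$, $\xi_x^{\mathbf u}(0)=x$, $\xi_x^{\mathbf u}(t+1)=f(\xi_x^{\mathbf u}(t),\mathbf u(t))$. Let $\mathcal Y=\{\ell(x):x\in\mathcal X\}$, $\mathcal Z=\{g(x):x\in\mathcal X\}$, and let $\overline\Pi$ be the set of augmented policies $\bar\pi:\mathcal X\times\mathcal Y\times\mathcal Z\to\mathcal U$. For $\bar\pi\in\overline\Pi$ and $x\in\mathcal X$, the augmented trajectory $(\bar\xi_x^{\bar\pi},\bar y_x^{\bar\pi},\bar z_x^{\bar\pi})$ is defined by $\bar\xi_x^{\bar\pi}(0)=x$, $\bar y_x^{\bar\pi}(0)=\ell(x)$, $\bar z_x^{\bar\pi}(0)=g(x)$ and $\bar\xi_x^{\bar\pi}(t+1)=f\big(\bar\xi_x^{\bar\pi}(t),\bar\pi(\bar\xi_x^{\bar\pi}(t),\bar y_x^{\bar\pi}(t),\bar z_x^{\bar\pi}(t))\big)$, $\bar y_x^{\bar\pi}(t+1)=\max\{\ell(\bar\xi_x^{\bar\pi}(t+1)),\bar y_x^{\bar\pi}(t)\}$,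 $\bar z_x^{\bar\pi}(t+1)=\min\{g(\bar\xi_x^{\bar\pi}(t+1)),\bar z_x^{\bar\pi}(t)\}$. *)

theory Defs
  imports Complex_Main
begin

fun traj_pol :: "('x \<Rightarrow> 'u \<Rightarrow> 'x) \<Rightarrow> ('x \<Rightarrow> 'u) \<Rightarrow> 'x \<Rightarrow> nat \<Rightarrow> 'x" where
  "traj_pol f p x 0 = x"
| "traj_pol f p x (Suc t) = f (traj_pol f p x t) (p (traj_pol f p x t))"

fun traj_seq :: "('x \<Rightarrow> 'u \<Rightarrow> 'x) \<Rightarrow> (nat \<Rightarrow> 'u) \<Rightarrow> 'x \<Rightarrow> nat \<Rightarrow> 'x" where
  "traj_seq f u x 0 = x"
| "traj_seq f u x (Suc t) = f (traj_seq f u x t) (u t)"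

fun aug_traj :: "('x \<Rightarrow> 'u \<Rightarrow> 'x) \<Rightarrow> ('x \<Rightarrow> real) \<Rightarrow> ('x \<Rightarrow> real)
    \<Rightarrow> ('x \<Rightarrow> real \<Rightarrow> real \<Rightarrow> 'u) \<Rightarrow> 'x \<Rightarrow> nat \<Rightarrow> 'x \<times> real \<times> real" where
  "aug_traj f l g pb x 0 = (x, l x, g x)"
| "aug_traj f l g pb x (Suc t) =
     (case aug_traj f l g pb x t of (s, y, z) \<Rightarrow>
        (let s' = f s (pb s y z) in (s', max (l s') y, min (g s') z)))"

text \<open>Augmented policies: maps defined on X x Y x Z with Y = range l, Z = range g
  (extensional: undefined outside the domain).\<close>
definition aug_policies :: "('x \<Rightarrow> real) \<Rightarrow> ('x \<Rightarrow> real) \<Rightarrow> ('x \<Rightarrow> real \<Rightarrow> real \<Rightarrow> 'u) set" where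
  "aug_policies l g = {pb. \<forall>s y z. (y \<notin> range l \<or> z \<notin> range g) \<longrightarrow> pb s y z = undefined}"

definition V_A :: "('x::finite \<Rightarrow> 'u::finite \<Rightarrow> 'x) \<Rightarrow> ('x \<Rightarrow> real) \<Rightarrow> 'x \<Rightarrow> real" where
  "V_A f g x = Max ((\<lambda>p. Min (range (\<lambda>\<tau>. g (traj_pol f p x \<tau>)))) ` UNIV)"

definition l_tilde :: "('x::finite \<Rightarrow> 'u::finite \<Rightarrow> 'x) \<Rightarrow> ('x \<Rightarrow> real) \<Rightarrow> ('x \<Rightarrow> real) \<Rightarrow> 'x \<Rightarrow> real" where
  "l_tilde f l g x = min (l x) (V_A f g x)"

definition V_RA_tilde :: "('x::finite \<Rightarrow> 'u::finite \<Rightarrow> 'x) \<Rightarrow> ('x \<Rightarrow> real) \<Rightarrow> ('x \<Rightarrow> real) \<Rightarrow> 'x \<Rightarrow> real" where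
  "V_RA_tilde f l g x = Max ((\<lambda>p. Max (range (\<lambda>\<tau>.
      min (l_tilde f l g (traj_pol f p x \<tau>)) (Min ((\<lambda>\<kappa>. g (traj_pol f p x \<kappa>)) ` {..\<tau>}))))) ` UNIV)"

end

theory Submission
  imports Defs
begin

(* All three quantities are maxima of finitely many values, so it suffices to show that each
   is at least v iff some open-loop action sequence reaches {l \<ge> v} while staying in
   {g \<ge> v}.  Such a sequence splits at the reaching time into a prefix ending in the viability
   kernel of {g \<ge> v}, on which a stationary safe policy exists, and a suffix.  Removing loops
   from the prefix makes it realisable by a feedback policy; since V_A s \<ge> v means exactly
   that s lies in the kernel, this characterises V_RA_tilde.  An augmented policy follows the
   prefix policy until the running maximum of l has reached v inside the kernel and then
   switches to the safe policy. *)

lemma traj_seq_feedback: "traj_seq f (\<lambda>t. p (traj_pol f p x t)) x = traj_pol f p x"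
proof
  fix t
  show "traj_seq f (\<lambda>t. p (traj_pol f p x t)) x t = traj_pol f p x t"
    by (induction t) simp_all
qed

lemma traj_seq_shift: "traj_seq f (\<lambda>t. u (t + m)) (traj_seq f u x m) t = traj_seq f u x (t + m)"
  by (induction t) simp_all

lemma traj_seq_append:
  "traj_seq f (\<lambda>t. if t < n then u t else w (t - n)) x t
   = (if t \<le> n then traj_seq f u x t else traj_seq f w (traj_seq f u x n) (t - n))"
proof (induction t)
  case (Suc t)
  then show ?case
    by (cases "t < n") (auto simp: Suc_diff_le not_less)
qed simp

lemma traj_seq_skip_loop:
  assumes "i < j" "traj_seq f u x i = traj_seq f u x j"
  shows "traj_seq f (\<lambda>t. if t < i then u t else u (t + (j - i))) x t
         = traj_seq f u x (if t \<le> i then t else t + (j - i))"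
proof (induction t)
  case (Suc t)
  then show ?case
    using assms by (cases "t < i") (auto simp: not_less le_Suc_eq)
qed simp

lemma traj_seq_loop_free:
  assumes "traj_seq f u x n \<in> T" "\<forall>k\<le>n. traj_seq f u x k \<in> A"
  shows "\<exists>u n. traj_seq f u x n \<in> T \<and> (\<forall>k\<le>n. traj_seq f u x k \<in> A)
               \<and> inj_on (traj_seq f u x) {..n}"
  using assms
proof (induction n arbitrary: u rule: less_induct)
  case (less n)
  show ?case
  proof (cases "inj_on (traj_seq f u x) {..n}")
    case True
    with less.prems show ?thesis by blast
  next
    case False
    then obtain i j where ij: "i < j" "j \<le> n" "traj_seq f u x i = traj_seq f u x j"
      unfolding inj_on_def by (metis atMost_iff linorder_neqE_nat order.strict_implies_order order.trans)
    define u' where "u' = (\<lambda>t. if t < i then u t else u (t + (j - i)))"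
    have u': "traj_seq f u' x t = traj_seq f u x (if t \<le> i then t else t + (j - i))" for t
      unfolding u'_def using traj_seq_skip_loop[OF ij(1,3)] .
    have "traj_seq f u' x (n - (j - i)) = traj_seq f u x n"
      using ij by (cases "n = j") (auto simp: u')
    moreover have "\<forall>k\<le>n - (j - i). traj_seq f u' x k \<in> A"
      using less.prems(2) ij by (auto simp: u')
    ultimately show ?thesis
      using less.IH[of "n - (j - i)" u'] less.prems(1) ij by auto
  qed
qed

(* On a loop-free path the time is a function of the state, so the actions become feedback. *)
lemma traj_pol_follows_inj_traj_seq:
  assumes "inj_on (traj_seq f u x) {..n}" "t \<le> n"
  shows "traj_pol f (\<lambda>s. u (inv_into {..n} (traj_seq f u x) s)) x t = traj_seq f u x t"
  using assms(2) by (induction t) (simp_all add: assms(1))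

definition viable :: "('x \<Rightarrow> 'u \<Rightarrow> 'x) \<Rightarrow> 'x set \<Rightarrow> 'x set" where
  "viable f A = {s. \<exists>u. \<forall>t. traj_seq f u s t \<in> A}"

definition viable_policy :: "('x \<Rightarrow> 'u \<Rightarrow> 'x) \<Rightarrow> 'x set \<Rightarrow> 'x \<Rightarrow> 'u" where
  "viable_policy f A s = (SOME a. f s a \<in> viable f A)"

lemma viable_subset: "viable f A \<subseteq> A"
proof
  fix s
  assume "s \<in> viable f A"
  then obtain u where "\<forall>t. traj_seq f u s t \<in> A"
    unfolding viable_def by blast
  then show "s \<in> A"
    using traj_seq.simps(1) by metis
qed

lemma viable_step: "s \<in> viable f A \<Longrightarrow> f s (viable_policy f A s) \<in> viable f A"
proof -
  assume "s \<in> viable f A"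
  then obtain u where "\<forall>t. traj_seq f u s t \<in> A"
    unfolding viable_def by blast
  then have "\<forall>t. traj_seq f (\<lambda>t. u (t + 1)) (traj_seq f u s 1) t \<in> A"
    unfolding traj_seq_shift by blast
  then have "\<exists>a. f s a \<in> viable f A"
    unfolding viable_def One_nat_def by auto
  then show ?thesis
    unfolding viable_policy_def by (rule someI_ex)
qed

lemma traj_pol_viable_policy:
  "s \<in> viable f A \<Longrightarrow> traj_pol f (viable_policy f A) s t \<in> viable f A"
  by (induction t) (simp_all add: viable_step)

lemma viable_iff_policy: "s \<in> viable f A \<longleftrightarrow> (\<exists>p. \<forall>t. traj_pol f p s t \<in> A)"
proof
  assume "s \<in> viable f A"
  then have "traj_pol f (viable_policy f A) s t \<in> A" for t
    by (rule subsetD[OF viable_subset traj_pol_viable_policy])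
  then show "\<exists>p. \<forall>t. traj_pol f p s t \<in> A" by blast
next
  assume "\<exists>p. \<forall>t. traj_pol f p s t \<in> A"
  then obtain p where "\<forall>t. traj_pol f p s t \<in> A" ..
  then have "\<forall>t. traj_seq f (\<lambda>t. p (traj_pol f p s t)) s t \<in> A"
    by (simp add: traj_seq_feedback)
  then show "s \<in> viable f A"
    unfolding viable_def by blast
qed

lemma reach_and_stay_iff_reach_viable:
  "(\<exists>u. (\<exists>t. traj_seq f u x t \<in> B) \<and> (\<forall>t. traj_seq f u x t \<in> A))
   \<longleftrightarrow> (\<exists>u n. traj_seq f u x n \<in> B \<inter> viable f A \<and> (\<forall>k\<le>n. traj_seq f u x k \<in> A))"
proof
  assume "\<exists>u. (\<exists>t. traj_seq f u x t \<in> B) \<and> (\<forall>t. traj_seq f u x t \<in> A)"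
  then obtain u n where reach: "traj_seq f u x n \<in> B" and safe: "\<forall>t. traj_seq f u x t \<in> A"
    by blast
  from safe have "\<forall>t. traj_seq f (\<lambda>t. u (t + n)) (traj_seq f u x n) t \<in> A"
    by (simp add: traj_seq_shift)
  then have "traj_seq f u x n \<in> viable f A"
    unfolding viable_def by blast
  with reach safe show "\<exists>u n. traj_seq f u x n \<in> B \<inter> viable f A \<and> (\<forall>k\<le>n. traj_seq f u x k \<in> A)"
    by blast
next
  assume "\<exists>u n. traj_seq f u x n \<in> B \<inter> viable f A \<and> (\<forall>k\<le>n. traj_seq f u x k \<in> A)"
  then obtain u n w where reach: "traj_seq f u x n \<in> B" "\<forall>k\<le>n. traj_seq f u x k \<in> A"
    and stay: "\<forall>t. traj_seq f w (traj_seq f u x n) t \<in> A"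
    unfolding viable_def by blast
  let ?uw = "\<lambda>t. if t < n then u t else w (t - n)"
  have "traj_seq f ?uw x n \<in> B" "\<forall>t. traj_seq f ?uw x t \<in> A"
    using reach stay by (simp_all add: traj_seq_append)
  then show "\<exists>u. (\<exists>t. traj_seq f u x t \<in> B) \<and> (\<forall>t. traj_seq f u x t \<in> A)"
    by blast
qed

lemma reach_avoid_open_loop_iff_feedback:
  "(\<exists>u n. traj_seq f u x n \<in> T \<and> (\<forall>k\<le>n. traj_seq f u x k \<in> A))
   \<longleftrightarrow> (\<exists>p n. traj_pol f p x n \<in> T \<and> (\<forall>k\<le>n. traj_pol f p x k \<in> A))"
proof
  assume "\<exists>u n. traj_seq f u x n \<in> T \<and> (\<forall>k\<le>n. traj_seq f u x k \<in> A)"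
  then obtain u\<^sub>0 n\<^sub>0 where "traj_seq f u\<^sub>0 x n\<^sub>0 \<in> T" "\<forall>k\<le>n\<^sub>0. traj_seq f u\<^sub>0 x k \<in> A"
    by blast
  from traj_seq_loop_free[OF this] obtain u n
    where reach: "traj_seq f u x n \<in> T" "\<forall>k\<le>n. traj_seq f u x k \<in> A"
      and loop_free: "inj_on (traj_seq f u x) {..n}"
    by blast
  let ?p = "\<lambda>s. u (inv_into {..n} (traj_seq f u x) s)"
  have "traj_pol f ?p x k = traj_seq f u x k" if "k \<le> n" for k
    using traj_pol_follows_inj_traj_seq[OF loop_free that] .
  with reach show "\<exists>p n. traj_pol f p x n \<in> T \<and> (\<forall>k\<le>n. traj_pol f p x k \<in> A)"
    by (intro exI[of _ ?p] exI[of _ n]) auto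
next
  assume "\<exists>p n. traj_pol f p x n \<in> T \<and> (\<forall>k\<le>n. traj_pol f p x k \<in> A)"
  then obtain p n where "traj_pol f p x n \<in> T" "\<forall>k\<le>n. traj_pol f p x k \<in> A"
    by blast
  then show "\<exists>u n. traj_seq f u x n \<in> T \<and> (\<forall>k\<le>n. traj_seq f u x k \<in> A)"
    by (intro exI[of _ "\<lambda>t. p (traj_pol f p x t)"] exI[of _ n]) (simp add: traj_seq_feedback)
qed

lemma finite_range_comp: "finite (range (\<lambda>t. h (\<xi> t :: 'x::finite)))"
  by (rule finite_subset[of _ "range h"]) auto

lemma le_reach_avoid_payoff_iff:
  fixes \<xi> :: "nat \<Rightarrow> 'x::finite"
  shows "v \<le> min (Max (range (\<lambda>\<tau>. l (\<xi> \<tau>)))) (Min (range (\<lambda>\<tau>. g (\<xi> \<tau>))))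
         \<longleftrightarrow> (\<exists>t. v \<le> l (\<xi> t)) \<and> (\<forall>t. v \<le> g (\<xi> t))"
  using finite_range_comp[of l \<xi>] finite_range_comp[of g \<xi>] by (simp add: Max_ge_iff)

lemma reach_avoid_payoff_in_range:
  fixes \<xi> :: "nat \<Rightarrow> 'x::finite"
  shows "min (Max (range (\<lambda>\<tau>. l (\<xi> \<tau>)))) (Min (range (\<lambda>\<tau>. g (\<xi> \<tau>)))) \<in> range l \<union> range g"
proof -
  have "Max (range (\<lambda>\<tau>. l (\<xi> \<tau>))) \<in> range (\<lambda>\<tau>. l (\<xi> \<tau>))"
    by (intro Max_in finite_range_comp) simp
  moreover have "Min (range (\<lambda>\<tau>. g (\<xi> \<tau>))) \<in> range (\<lambda>\<tau>. g (\<xi> \<tau>))"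
    by (intro Min_in finite_range_comp) simp
  ultimately show ?thesis
    by (auto simp: min_def)
qed

lemma le_Max_reach_avoid_payoff_iff:
  fixes \<xi> :: "'c \<Rightarrow> nat \<Rightarrow> 'x::finite"
  assumes "C \<noteq> {}"
  shows "v \<le> Max ((\<lambda>c. min (Max (range (\<lambda>\<tau>. l (\<xi> c \<tau>)))) (Min (range (\<lambda>\<tau>. g (\<xi> c \<tau>))))) ` C)
         \<longleftrightarrow> (\<exists>c\<in>C. (\<exists>t. v \<le> l (\<xi> c t)) \<and> (\<forall>t. v \<le> g (\<xi> c t)))"
proof -
  have "finite ((\<lambda>c. min (Max (range (\<lambda>\<tau>. l (\<xi> c \<tau>)))) (Min (range (\<lambda>\<tau>. g (\<xi> c \<tau>))))) ` C)"
    by (rule finite_subset[of _ "range l \<union> range g"]) (use reach_avoid_payoff_in_range in blast, simp)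
  with assms show ?thesis
    by (simp add: Max_ge_iff le_reach_avoid_payoff_iff del: min.bounded_iff)
qed

lemma le_V_A_iff:
  fixes f :: "'x::finite \<Rightarrow> 'u::finite \<Rightarrow> 'x"
  shows "v \<le> V_A f g s \<longleftrightarrow> s \<in> viable f {s. v \<le> g s}"
proof -
  have "v \<le> V_A f g s \<longleftrightarrow> (\<exists>p. \<forall>t. traj_pol f p s t \<in> {s. v \<le> g s})"
    unfolding V_A_def by (simp add: Max_ge_iff finite_range_comp)
  then show ?thesis
    by (simp add: viable_iff_policy)
qed

lemma le_V_RA_tilde_iff:
  fixes f :: "'x::finite \<Rightarrow> 'u::finite \<Rightarrow> 'x"
  shows "v \<le> V_RA_tilde f l g x \<longleftrightarrow>
    (\<exists>p \<tau>. traj_pol f p x \<tau> \<in> {s. v \<le> l s} \<inter> viable f {s. v \<le> g s}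
           \<and> (\<forall>\<kappa>\<le>\<tau>. traj_pol f p x \<kappa> \<in> {s. v \<le> g s}))"
proof -
  have "Min ((\<lambda>\<kappa>. g (traj_pol f p x \<kappa>)) ` {..\<tau>}) \<in> (\<lambda>\<kappa>. g (traj_pol f p x \<kappa>)) ` {..\<tau>}" for p \<tau>
    by (rule Min_in) auto
  then have "Min ((\<lambda>\<kappa>. g (traj_pol f p x \<kappa>)) ` {..\<tau>}) \<in> range g" for p \<tau>
    by blast
  then have "range (\<lambda>\<tau>. min (l_tilde f l g (traj_pol f p x \<tau>)) (Min ((\<lambda>\<kappa>. g (traj_pol f p x \<kappa>)) ` {..\<tau>})))
             \<subseteq> range (l_tilde f l g) \<union> range g" for p
    by (auto simp: min_def)
  then have "finite (range (\<lambda>\<tau>. min (l_tilde f l g (traj_pol f p x \<tau>)) (Min ((\<lambda>\<kappa>. g (traj_pol f p x \<kappa>)) ` {..\<tau>}))))" for p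
    by (rule finite_subset) simp
  then show ?thesis
    unfolding V_RA_tilde_def l_tilde_def by (auto simp: Max_ge_iff le_V_A_iff)
qed

lemma aug_traj_state_Suc:
  "fst (aug_traj f l g pb x (Suc t)) = (case aug_traj f l g pb x t of (s, y, z) \<Rightarrow> f s (pb s y z))"
  by (simp add: Let_def split: prod.split)

lemma aug_traj_running_extrema:
  "aug_traj f l g pb x t = (fst (aug_traj f l g pb x t),
     Max ((\<lambda>k. l (fst (aug_traj f l g pb x k))) ` {..t}),
     Min ((\<lambda>k. g (fst (aug_traj f l g pb x k))) ` {..t}))"
proof (induction t)
  case (Suc t)
  obtain s y z where t: "aug_traj f l g pb x t = (s, y, z)"
    by (cases "aug_traj f l g pb x t") auto
  with Suc have "y = Max ((\<lambda>k. l (fst (aug_traj f l g pb x k))) ` {..t})"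
    "z = Min ((\<lambda>k. g (fst (aug_traj f l g pb x k))) ` {..t})"
    by simp_all
  moreover have "{..Suc t} = insert (Suc t) {..t}"
    by auto
  ultimately show ?case
    using t by (simp add: Let_def max.commute min.commute)
qed simp

lemma aug_traj_state_eq_traj_seq:
  "fst (aug_traj f l g pb x t)
   = traj_seq f (\<lambda>t. case aug_traj f l g pb x t of (s, y, z) \<Rightarrow> pb s y z) x t"
proof (induction t)
  case (Suc t)
  obtain s y z where "aug_traj f l g pb x t = (s, y, z)"
    by (cases "aug_traj f l g pb x t") auto
  with Suc show ?case
    unfolding aug_traj_state_Suc by simp
qed simp

definition switch_policy ::
    "('x \<Rightarrow> real) \<Rightarrow> ('x \<Rightarrow> real) \<Rightarrow> 'x set \<Rightarrow> real \<Rightarrow> ('x \<Rightarrow> 'u) \<Rightarrow> ('x \<Rightarrow> 'u)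
     \<Rightarrow> 'x \<Rightarrow> real \<Rightarrow> real \<Rightarrow> 'u" where
  "switch_policy l g K v p q s y z =
    (if y \<in> range l \<and> z \<in> range g then if s \<in> K \<and> v \<le> y then q s else p s else undefined)"

lemma switch_policy_in_aug_policies: "switch_policy l g K v p q \<in> aug_policies l g"
  unfolding aug_policies_def switch_policy_def by auto

lemma aug_traj_switch_policy_Suc:
  fixes f :: "'x \<Rightarrow> 'u \<Rightarrow> 'x" and l g :: "'x \<Rightarrow> real" and K v p q x
  defines "S \<equiv> \<lambda>t. fst (aug_traj f l g (switch_policy l g K v p q) x t)"
  shows "S (Suc t) = f (S t) (if S t \<in> K \<and> v \<le> Max ((\<lambda>k. l (S k)) ` {..t}) then q (S t) else p (S t))"
proof -
  have extrema: "aug_traj f l g (switch_policy l g K v p q) x t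
        = (S t, Max ((\<lambda>k. l (S k)) ` {..t}), Min ((\<lambda>k. g (S k)) ` {..t}))"
    unfolding S_def by (rule aug_traj_running_extrema)
  have "Max ((\<lambda>k. l (S k)) ` {..t}) \<in> (\<lambda>k. l (S k)) ` {..t}"
    "Min ((\<lambda>k. g (S k)) ` {..t}) \<in> (\<lambda>k. g (S k)) ` {..t}"
    by (rule Max_in Min_in; simp)+
  then have "Max ((\<lambda>k. l (S k)) ` {..t}) \<in> range l" "Min ((\<lambda>k. g (S k)) ` {..t}) \<in> range g"
    by blast+
  moreover have "S (Suc t) = (case aug_traj f l g (switch_policy l g K v p q) x t of
      (s, y, z) \<Rightarrow> f s (switch_policy l g K v p q s y z))"
    unfolding S_def by (rule aug_traj_state_Suc)
  ultimately show ?thesis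
    using extrema by (auto simp: switch_policy_def)
qed

lemma aug_policy_from_feedback:
  assumes reach: "traj_pol f p x \<tau> \<in> {s. v \<le> l s} \<inter> viable f {s. v \<le> g s}"
    and safe: "\<forall>\<kappa>\<le>\<tau>. traj_pol f p x \<kappa> \<in> {s. v \<le> g s}"
  shows "\<exists>pb\<in>aug_policies l g.
           (\<exists>t. v \<le> l (fst (aug_traj f l g pb x t))) \<and> (\<forall>t. v \<le> g (fst (aug_traj f l g pb x t)))"
proof -
  let ?G = "{s. v \<le> g s}"
  let ?pb = "switch_policy l g (viable f ?G) v p (viable_policy f ?G)"
  define S where "S t = fst (aug_traj f l g ?pb x t)" for t
  define Y where "Y t = Max ((\<lambda>k. l (S k)) ` {..t})" for t
  define switched where "switched t \<longleftrightarrow> S t \<in> viable f ?G \<and> v \<le> Y t" for t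
  have S_Suc: "S (Suc t) = f (S t) (if switched t then viable_policy f ?G (S t) else p (S t))" for t
    unfolding S_def Y_def switched_def by (rule aug_traj_switch_policy_Suc)
  have Y_le: "l (S t) \<le> Y t" "Y t \<le> Y (Suc t)" for t
    unfolding Y_def by (auto intro: Max_mono)
  have switched_Suc: "switched t \<Longrightarrow> switched (Suc t)" for t
    using viable_step[of "S t" f ?G] Y_le(2)[of t] by (auto simp: S_Suc switched_def)
  have switched_stays: "switched t" if "m \<le> t" "switched m" for m t
    using that by (induction t rule: dec_induct) (auto intro: switched_Suc)
  have before_switch: "\<forall>k<t. \<not> switched k \<Longrightarrow> S t = traj_pol f p x t" for t
    by (induction t) (simp_all add: S_Suc, simp add: S_def)
  \<comment> \<open>At the latest at time \<tau> the switch is due, since the prefix policy is then in the kernel.\<close>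
  obtain m where m: "m \<le> \<tau>" "\<forall>k<m. \<not> switched k" "switched m \<or> m = \<tau>"
    using ex_least_nat_le[of "\<lambda>k. switched k \<or> k = \<tau>" \<tau>] by auto
  have "switched m"
    using m reach before_switch[of \<tau>] Y_le(1)[of \<tau>] by (auto simp: switched_def)
  then obtain k where "v \<le> l (S k)"
    unfolding switched_def Y_def by (auto simp: Max_ge_iff)
  moreover have "v \<le> g (S t)" for t
  proof (cases "t \<le> m")
    case True
    then show ?thesis
      using m before_switch[of t] safe by auto
  next
    case False
    then have "S t \<in> viable f ?G"
      using switched_stays[of m t] \<open>switched m\<close> by (simp add: switched_def)
    then show ?thesis
      using subsetD[OF viable_subset] by fastforce
  qed
  ultimately show ?thesis
    using switch_policy_in_aug_policies unfolding S_def by blast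
qed

lemma aug_policy_reach_avoid_iff:
  "(\<exists>pb\<in>aug_policies l g.
      (\<exists>t. v \<le> l (fst (aug_traj f l g pb x t))) \<and> (\<forall>t. v \<le> g (fst (aug_traj f l g pb x t))))
   \<longleftrightarrow> (\<exists>u. (\<exists>t. v \<le> l (traj_seq f u x t)) \<and> (\<forall>t. v \<le> g (traj_seq f u x t)))"
proof
  assume "\<exists>pb\<in>aug_policies l g.
      (\<exists>t. v \<le> l (fst (aug_traj f l g pb x t))) \<and> (\<forall>t. v \<le> g (fst (aug_traj f l g pb x t)))"
  then show "\<exists>u. (\<exists>t. v \<le> l (traj_seq f u x t)) \<and> (\<forall>t. v \<le> g (traj_seq f u x t))"
    unfolding aug_traj_state_eq_traj_seq by blast
next
  assume "\<exists>u. (\<exists>t. v \<le> l (traj_seq f u x t)) \<and> (\<forall>t. v \<le> g (traj_seq f u x t))"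
  then have "\<exists>u. (\<exists>t. traj_seq f u x t \<in> {s. v \<le> l s}) \<and> (\<forall>t. traj_seq f u x t \<in> {s. v \<le> g s})"
    by simp
  then obtain p \<tau> where "traj_pol f p x \<tau> \<in> {s. v \<le> l s} \<inter> viable f {s. v \<le> g s}"
    "\<forall>\<kappa>\<le>\<tau>. traj_pol f p x \<kappa> \<in> {s. v \<le> g s}"
    unfolding reach_and_stay_iff_reach_viable reach_avoid_open_loop_iff_feedback by blast
  then show "\<exists>pb\<in>aug_policies l g.
      (\<exists>t. v \<le> l (fst (aug_traj f l g pb x t))) \<and> (\<forall>t. v \<le> g (fst (aug_traj f l g pb x t)))"
    by (rule aug_policy_from_feedback)
qed

theorem theorem1:
  fixes f :: "'x::finite \<Rightarrow> 'u::finite \<Rightarrow> 'x"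
    and l g :: "'x \<Rightarrow> real"
    and x :: 'x
  shows "Max ((\<lambda>pb. min (Max (range (\<lambda>\<tau>. l (fst (aug_traj f l g pb x \<tau>)))))
                        (Min (range (\<lambda>\<tau>. g (fst (aug_traj f l g pb x \<tau>)))))) ` aug_policies l g)
         = Max ((\<lambda>u. min (Max (range (\<lambda>\<tau>. l (traj_seq f u x \<tau>))))
                         (Min (range (\<lambda>\<kappa>. g (traj_seq f u x \<kappa>))))) ` UNIV)
       \<and> Max ((\<lambda>u. min (Max (range (\<lambda>\<tau>. l (traj_seq f u x \<tau>))))
                         (Min (range (\<lambda>\<kappa>. g (traj_seq f u x \<kappa>))))) ` UNIV)
         = V_RA_tilde f l g x" (is "?A = ?B \<and> ?B = ?C")
proof -
  define reach_avoid where "reach_avoid v \<longleftrightarrow>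
    (\<exists>u. (\<exists>t. v \<le> l (traj_seq f u x t)) \<and> (\<forall>t. v \<le> g (traj_seq f u x t)))" for v
  have "(\<lambda>_ _ _. undefined) \<in> aug_policies l g"
    unfolding aug_policies_def by simp
  then have A: "v \<le> ?A \<longleftrightarrow> reach_avoid v" for v
    unfolding reach_avoid_def aug_policy_reach_avoid_iff[symmetric]
    by (intro le_Max_reach_avoid_payoff_iff[where \<xi> = "\<lambda>pb t. fst (aug_traj f l g pb x t)"]) blast
  have B: "v \<le> ?B \<longleftrightarrow> reach_avoid v" for v
    unfolding reach_avoid_def
    using le_Max_reach_avoid_payoff_iff[where \<xi> = "\<lambda>u. traj_seq f u x", OF UNIV_not_empty] by simp
  have C: "v \<le> ?C \<longleftrightarrow> reach_avoid v" for v
    unfolding reach_avoid_def le_V_RA_tilde_iff reach_avoid_open_loop_iff_feedback[symmetric]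
      reach_and_stay_iff_reach_viable[symmetric] by simp
  have "?A = ?B" "?B = ?C"
    using A B C by (meson order.antisym order.refl)+
  then show ?thesis ..
qed

end
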